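(* Let $\mathcal P$ be a Poisson $n$-Lie algebra. Then $\operatorname{Nil}(\mathcal P)$ is contained in every maximal hypo-nilpotent ideal of $\mathcal P$.
   Context: A Poisson $n$-Lie algebra is a commutative associative algebra $(\mathcal P,\cdot)$ with an $n$-linear skew-symmetric bracket satisfying the fundamental identity $[x_1,\dots,x_{n-1},[y_1,\dots,y_n]]=\sum_{i=1}^n[y_1,\dots,[x_1,\dots,x_{n-1},y_i],\dots,y_n]$ and the Leibniz rule $[y\cdot z,x_2,\dots,x_n]=y\cdot[z,x_2,\dots,x_n]+z\cdot[y,x_2,\dots,x_n]$. Products/brackets of subspaces are linear spans. For an ideal $\mathcal I$ (subspace with $\mathcal P\cdot\mathcal I\subseteq\mathcal I$, $[\mathcal I,\mathcal P,\dots,\mathcal P]\subseteq\mathcal I$): $\mathcal I^1=\mathcal I$, $\mathcal I^{k+1}=[\mathcal I^k,\mathcal I,\mathcal P,\dots,\mathcal P]+\mathcal I^k\cdot\mathcal I$, and $\mathcal I^{[1]}=\mathcal I$, $\mathcal I^{[k+1]}=[\mathcal I^{[k]},\mathcal I,\dots,\mathcal I]+\mathcal I^{[k]}\cdot\mathcal I$. $\mathcal I$ is a nilpotent ideal if $\mathcal I^s=0$ for some $s$, and nilpotent as a subalgebra if $\mathcal I^{[s]}=0$ for some $s$. $\operatorname{Nil}(\mathcal P)$ is the maximal nilpotent ideal of $\mathcal P$. A hypo-nilpotent ideal is an ideal that is nilpotent as a subalgebra but not nilpotent as an ideal; a maximal hypo-nilpotent ideal is one not properly contained in any other hypo-nilpotent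 ideal. *)

theory Defs
  imports Complex_Main
begin

text \<open>A Poisson n-Lie algebra over a field 'k: the carrier is the type 'a, a vector
space via scale, with a commutative associative (not necessarily unital) bilinear
product given by the comm_ring multiplication of 'a, and an n-ary bracket
br applied to lists of length n.\<close>

definition poisson_nlie ::
  "('k::field \<Rightarrow> 'a::comm_ring \<Rightarrow> 'a) \<Rightarrow> ('a list \<Rightarrow> 'a) \<Rightarrow> nat \<Rightarrow> bool" where
  "poisson_nlie scale br n \<longleftrightarrow>
     vector_space scale \<and>
     \<comment> \<open>product is bilinear (additivity comes from comm_ring)\<close>
     (\<forall>c x y. scale c (x * y) = scale c x * y) \<and>
     \<comment> \<open>bracket is n-linear\<close>
     (\<forall>xs i x y. length xs = n \<and> i < n \<longrightarrow>
        br (xs[i := x + y]) = br (xs[i := x]) + br (xs[i := y])) \<and>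
     (\<forall>xs i c x. length xs = n \<and> i < n \<longrightarrow>
        br (xs[i := scale c x]) = scale c (br (xs[i := x]))) \<and>
     \<comment> \<open>skew-symmetry: swapping two arguments changes the sign\<close>
     (\<forall>xs i j. length xs = n \<and> i < n \<and> j < n \<and> i \<noteq> j \<longrightarrow>
        br (xs[i := xs ! j, j := xs ! i]) = - br xs) \<and>
     \<comment> \<open>fundamental identity\<close>
     (\<forall>xs ys. length xs = n - 1 \<and> length ys = n \<longrightarrow>
        br (xs @ [br ys]) = (\<Sum>i<n. br (ys[i := br (xs @ [ys ! i])]))) \<and>
     \<comment> \<open>Leibniz rule\<close>
     (\<forall>y z xs. length xs = n - 1 \<longrightarrow>
        br ((y * z) # xs) = y * br (z # xs) + z * br (y # xs))"

definition sprod :: "('k::field \<Rightarrow> 'a::comm_ring \<Rightarrow> 'a) \<Rightarrow> 'a set \<Rightarrow> 'a set \<Rightarrow> 'a set" where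
  "sprod scale A B = module.span scale {x * y | x y. x \<in> A \<and> y \<in> B}"

definition sbr :: "('k::field \<Rightarrow> 'a::comm_ring \<Rightarrow> 'a) \<Rightarrow> ('a list \<Rightarrow> 'a) \<Rightarrow> 'a set list \<Rightarrow> 'a set" where
  "sbr scale br As = module.span scale
     {br xs | xs. length xs = length As \<and> (\<forall>i<length xs. xs ! i \<in> As ! i)}"

definition ssum :: "('k::field \<Rightarrow> 'a::comm_ring \<Rightarrow> 'a) \<Rightarrow> 'a set \<Rightarrow> 'a set \<Rightarrow> 'a set" where
  "ssum scale A B = module.span scale (A \<union> B)"

definition pideal :: "('k::field \<Rightarrow> 'a::comm_ring \<Rightarrow> 'a) \<Rightarrow> ('a list \<Rightarrow> 'a) \<Rightarrow> nat \<Rightarrow> 'a set \<Rightarrow> bool" where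
  "pideal scale br n I \<longleftrightarrow> module.subspace scale I \<and>
     (\<forall>p x. x \<in> I \<longrightarrow> p * x \<in> I) \<and>
     sbr scale br (I # replicate (n - 1) UNIV) \<subseteq> I"

text \<open>ideal_pow scale br n I k is I^(k+1):
  I^1 = I, I^(k+1) = [I^k, I, P, ..., P] + I^k . I\<close>
primrec ideal_pow :: "('k::field \<Rightarrow> 'a::comm_ring \<Rightarrow> 'a) \<Rightarrow> ('a list \<Rightarrow> 'a) \<Rightarrow> nat \<Rightarrow> 'a set \<Rightarrow> nat \<Rightarrow> 'a set" where
  "ideal_pow scale br n I 0 = I"
| "ideal_pow scale br n I (Suc k) =
     ssum scale (sbr scale br (ideal_pow scale br n I k # I # replicate (n - 2) UNIV))
                (sprod scale (ideal_pow scale br n I k) I)"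

text \<open>derived_pow scale br n I k is I^[k+1]:
  I^[1] = I, I^[k+1] = [I^[k], I, ..., I] + I^[k] . I\<close>
primrec derived_pow :: "('k::field \<Rightarrow> 'a::comm_ring \<Rightarrow> 'a) \<Rightarrow> ('a list \<Rightarrow> 'a) \<Rightarrow> nat \<Rightarrow> 'a set \<Rightarrow> nat \<Rightarrow> 'a set" where
  "derived_pow scale br n I 0 = I"
| "derived_pow scale br n I (Suc k) =
     ssum scale (sbr scale br (derived_pow scale br n I k # replicate (n - 1) I))
                (sprod scale (derived_pow scale br n I k) I)"

definition nilpotent_ideal :: "('k::field \<Rightarrow> 'a::comm_ring \<Rightarrow> 'a) \<Rightarrow> ('a list \<Rightarrow> 'a) \<Rightarrow> nat \<Rightarrow> 'a set \<Rightarrow> bool" where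
  "nilpotent_ideal scale br n I \<longleftrightarrow> pideal scale br n I \<and> (\<exists>s. ideal_pow scale br n I s = {0})"

definition nilpotent_subalg :: "('k::field \<Rightarrow> 'a::comm_ring \<Rightarrow> 'a) \<Rightarrow> ('a list \<Rightarrow> 'a) \<Rightarrow> nat \<Rightarrow> 'a set \<Rightarrow> bool" where
  "nilpotent_subalg scale br n I \<longleftrightarrow> (\<exists>s. derived_pow scale br n I s = {0})"

definition hypo_nilpotent :: "('k::field \<Rightarrow> 'a::comm_ring \<Rightarrow> 'a) \<Rightarrow> ('a list \<Rightarrow> 'a) \<Rightarrow> nat \<Rightarrow> 'a set \<Rightarrow> bool" where
  "hypo_nilpotent scale br n I \<longleftrightarrow> pideal scale br n I \<and> nilpotent_subalg scale br n I
     \<and> \<not> nilpotent_ideal scale br n I"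

definition max_hypo_nilpotent :: "('k::field \<Rightarrow> 'a::comm_ring \<Rightarrow> 'a) \<Rightarrow> ('a list \<Rightarrow> 'a) \<Rightarrow> nat \<Rightarrow> 'a set \<Rightarrow> bool" where
  "max_hypo_nilpotent scale br n I \<longleftrightarrow> hypo_nilpotent scale br n I \<and>
     (\<forall>J. hypo_nilpotent scale br n J \<and> I \<subseteq> J \<longrightarrow> J = I)"

definition is_Nil :: "('k::field \<Rightarrow> 'a::comm_ring \<Rightarrow> 'a) \<Rightarrow> ('a list \<Rightarrow> 'a) \<Rightarrow> nat \<Rightarrow> 'a set \<Rightarrow> bool" where
  "is_Nil scale br n N \<longleftrightarrow> nilpotent_ideal scale br n N \<and>
     (\<forall>I. nilpotent_ideal scale br n I \<longrightarrow> I \<subseteq> N)"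

end

theory Submission
  imports Defs
begin

text \<open>Let K = J + N. It is an ideal, and it is not a nilpotent ideal, because it contains J
  and an ideal inside a nilpotent ideal is nilpotent. It is nilpotent as a subalgebra: its
  derived series lies in the filtration F c spanned by the intersections J^[a] \<inter> N^t with
  a + t = c, because bracketing or multiplying with a further factor from J raises a and with
  a factor from N raises t (all these powers being ideals), and F c = 0 once c exceeds the
  nilpotency indices of J and N. So K is hypo-nilpotent, maximality of J gives K = J, and
  hence N \<subseteq> J.\<close>

lemma list_all2_replicate_right:
  "list_all2 P xs (replicate m y) \<longleftrightarrow> length xs = m \<and> (\<forall>x\<in>set xs. P x y)"
  by (auto simp: list_all2_conv_all_nth all_set_conv_all_nth)

locale poisson_nlie_algebra =
  fixes scale :: "'k::field \<Rightarrow> 'a::comm_ring \<Rightarrow> 'a" and br :: "'a list \<Rightarrow> 'a" and n :: nat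
  assumes poisson: "poisson_nlie scale br n" and arity: "2 \<le> n"
begin

sublocale vs: vector_space scale
  using poisson unfolding poisson_nlie_def by blast

lemma scale_mult_left: "scale c (x * y) = scale c x * y"
  using poisson unfolding poisson_nlie_def by blast

lemma bracket_add:
  "length xs = n \<Longrightarrow> i < n \<Longrightarrow> br (xs[i := x + y]) = br (xs[i := x]) + br (xs[i := y])"
  using poisson unfolding poisson_nlie_def by blast

lemma bracket_scale:
  "length xs = n \<Longrightarrow> i < n \<Longrightarrow> br (xs[i := scale c x]) = scale c (br (xs[i := x]))"
  using poisson unfolding poisson_nlie_def by blast

lemma bracket_swap:
  "length xs = n \<Longrightarrow> i < n \<Longrightarrow> j < n \<Longrightarrow> i \<noteq> j \<Longrightarrow>
   br (xs[i := xs ! j, j := xs ! i]) = - br xs"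
  using poisson unfolding poisson_nlie_def by blast

lemma bracket_fundamental:
  "length xs = n - 1 \<Longrightarrow> length ys = n \<Longrightarrow>
   br (xs @ [br ys]) = (\<Sum>i<n. br (ys[i := br (xs @ [ys ! i])]))"
  using poisson unfolding poisson_nlie_def by blast

lemma bracket_leibniz:
  "length xs = n - 1 \<Longrightarrow> br ((y * z) # xs) = y * br (z # xs) + z * br (y # xs)"
  using poisson unfolding poisson_nlie_def by blast

lemma bracket_zero: "length xs = n \<Longrightarrow> i < n \<Longrightarrow> br (xs[i := 0]) = 0"
  using bracket_scale[of xs i 0 0] by simp

lemma subspace_bracket_slot:
  assumes "vs.subspace T" "length xs = n" "i < n"
  shows "vs.subspace {x. br (xs[i := x]) \<in> T}"
  using assms bracket_add[OF assms(2,3)] bracket_scale[OF assms(2,3)] bracket_zero[OF assms(2,3)]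
  by (simp add: vs.subspace_def)

lemma subspace_mult_left_preimage:
  assumes "vs.subspace T"
  shows "vs.subspace {x. x * y \<in> T}"
  using assms by (auto simp: vs.subspace_def distrib_right scale_mult_left[symmetric])

lemma mult_mem_span:
  assumes T: "vs.subspace T" and gen: "\<And>a b. a \<in> A \<Longrightarrow> b \<in> B \<Longrightarrow> a * b \<in> T"
    and x: "x \<in> vs.span A" and y: "y \<in> vs.span B"
  shows "x * y \<in> T"
proof -
  have "y \<in> {y. y * a \<in> T}" if "a \<in> A" for a
    by (rule vs.span_subspace_induct[OF y subspace_mult_left_preimage[OF T]])
       (use gen[OF that] in \<open>simp add: mult.commute\<close>)
  then have "x \<in> {x. x * y \<in> T}"
    by (intro vs.span_subspace_induct[OF x subspace_mult_left_preimage[OF T]])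
       (simp add: mult.commute)
  then show ?thesis by simp
qed

lemma bracket_mem_span_args:
  assumes T: "vs.subspace T" and len: "length Gs = n"
    and gen: "\<And>zs. list_all2 (\<in>) zs Gs \<Longrightarrow> br zs \<in> T"
    and xs: "list_all2 (\<lambda>x G. x \<in> vs.span G) xs Gs"
  shows "br xs \<in> T"
proof -
  have sweep: "br ys \<in> T"
    if "list_all2 (\<lambda>x G. x \<in> vs.span G) ys Gs" "\<forall>i. k \<le> i \<and> i < n \<longrightarrow> ys ! i \<in> Gs ! i"
    for k ys
    using that
  proof (induction k arbitrary: ys)
    case 0
    then show ?case using gen len by (auto simp: list_all2_conv_all_nth)
  next
    case (Suc k)
    show ?case
    proof (cases "k < n")
      case False
      then show ?thesis using Suc by auto
    next
      case True
      have len_ys: "length ys = n" using Suc.prems(1) len by (simp add: list_all2_lengthD)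
      have "ys ! k \<in> {v. br (ys[k := v]) \<in> T}"
      proof (rule vs.span_subspace_induct)
        show "ys ! k \<in> vs.span (Gs ! k)"
          using Suc.prems(1) True len_ys by (simp add: list_all2_conv_all_nth)
        show "vs.subspace {v. br (ys[k := v]) \<in> T}"
          by (rule subspace_bracket_slot[OF T len_ys True])
      next
        fix g assume g: "g \<in> Gs ! k"
        have "list_all2 (\<lambda>x G. x \<in> vs.span G) (ys[k := g]) Gs"
          using Suc.prems(1) g True len_ys vs.span_base
          by (auto simp: list_all2_conv_all_nth nth_list_update)
        moreover have "\<forall>i. k \<le> i \<and> i < n \<longrightarrow> ys[k := g] ! i \<in> Gs ! i"
          using Suc.prems(2) g len_ys by (auto simp: nth_list_update)
        ultimately show "g \<in> {v. br (ys[k := v]) \<in> T}"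
          using Suc.IH by simp
      qed
      then show ?thesis by simp
    qed
  qed
  show ?thesis by (rule sweep[OF xs, of n]) auto
qed

lemma bracket_mem_swap:
  assumes T: "vs.subspace T" and xs: "length xs = n" "i < n" "j < n"
    and swapped: "br (xs[i := xs ! j, j := xs ! i]) \<in> T"
  shows "br xs \<in> T"
proof (cases "i = j")
  case True
  with swapped show ?thesis by simp
next
  case False
  then have "br xs = - br (xs[i := xs ! j, j := xs ! i])"
    using bracket_swap[OF xs] by simp
  then show ?thesis using vs.subspace_neg[OF T swapped] by simp
qed

lemma bracket_of_bracket_mem:
  assumes T: "vs.subspace T" and xs: "length xs = n - 1" and ys: "length ys = n"
    and summands: "\<And>ws i. length ws = n - 1 \<Longrightarrow> i < n \<Longrightarrow>
                     br (ys[i := br (ws @ [ys ! i])]) \<in> T"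
  shows "br (br ys # xs) \<in> T"
proof -
  \<comment> \<open>Skew-symmetry moves br ys to the last slot, where the fundamental identity applies.\<close>
  define us where "us = br ys # xs"
  define zs where "zs = us[0 := us ! (n - 1), n - 1 := us ! 0]"
  have us: "length us = n" "us ! 0 = br ys" using xs arity by (simp_all add: us_def)
  have zs: "length zs = n" "zs ! (n - 1) = br ys" using us arity by (simp_all add: zs_def)
  then have "zs = butlast zs @ [br ys]"
    using arity by (metis append_butlast_last_id last_conv_nth list.size(3) not_numeral_le_zero)
  moreover have "length (butlast zs) = n - 1" using zs(1) by simp
  then have "br (butlast zs @ [br ys]) \<in> T"
    by (simp only: bracket_fundamental ys) (intro vs.subspace_sum[OF T] summands, auto)
  ultimately have "br zs \<in> T" by simp
  then show ?thesis
    using bracket_mem_swap[OF T us(1), of 0 "n - 1"] arity by (simp add: zs_def us_def)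
qed

lemma sbr_eq_span: "sbr scale br As = vs.span {br xs | xs. list_all2 (\<in>) xs As}"
  by (simp add: sbr_def list_all2_conv_all_nth)

lemma pideal_iff:
  "pideal scale br n I \<longleftrightarrow> vs.subspace I \<and> (\<forall>p x. x \<in> I \<longrightarrow> p * x \<in> I) \<and>
     (\<forall>x ys. x \<in> I \<longrightarrow> length ys = n - 1 \<longrightarrow> br (x # ys) \<in> I)"
proof -
  define G where "G = {br (x # ys) | x ys. x \<in> I \<and> length ys = n - 1}"
  have "{br xs | xs. list_all2 (\<in>) xs (I # replicate (n - 1) UNIV)} = G"
    unfolding G_def by (auto simp: list_all2_Cons2 list_all2_replicate_right)
  then have sbr: "sbr scale br (I # replicate (n - 1) UNIV) = vs.span G"
    by (simp add: sbr_eq_span)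
  have "vs.span G \<subseteq> I \<longleftrightarrow> G \<subseteq> I" if "vs.subspace I"
    using that vs.span_minimal vs.span_superset by blast
  then show ?thesis
    unfolding pideal_def sbr by (auto simp: G_def)
qed

lemma pideal_subspace: "pideal scale br n I \<Longrightarrow> vs.subspace I"
  by (simp add: pideal_iff)

lemma pideal_mult: "pideal scale br n I \<Longrightarrow> x \<in> I \<Longrightarrow> p * x \<in> I"
  by (simp add: pideal_iff)

lemma pideal_bracket_Cons:
  "pideal scale br n I \<Longrightarrow> x \<in> I \<Longrightarrow> length ys = n - 1 \<Longrightarrow> br (x # ys) \<in> I"
  by (simp add: pideal_iff)

lemma pideal_UNIV: "pideal scale br n UNIV"
  by (simp add: pideal_iff)

lemma pideal_bracket:
  assumes I: "pideal scale br n I" and xs: "length xs = n" "i < n" "xs ! i \<in> I"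
  shows "br xs \<in> I"
proof (rule bracket_mem_swap[OF pideal_subspace[OF I] xs(1) _ xs(2)])
  let ?ys = "xs[0 := xs ! i, i := xs ! 0]"
  have "?ys ! 0 \<in> I" "length ?ys = n" using xs by (auto simp: nth_list_update)
  then have "br (?ys ! 0 # tl ?ys) \<in> I" by (simp add: pideal_bracket_Cons[OF I])
  moreover have "?ys = ?ys ! 0 # tl ?ys" using xs arity by (cases ?ys) auto
  ultimately show "br ?ys \<in> I" by simp
qed (use arity in simp)

abbreviation pow_step :: "'a set \<Rightarrow> 'a set list \<Rightarrow> 'a set \<Rightarrow> 'a set" where
  "pow_step A Ls B \<equiv> ssum scale (sbr scale br (A # Ls)) (sprod scale A B)"

lemma pow_step_eq_span:
  "pow_step A Ls B = vs.span ({br (y # ys) | y ys. y \<in> A \<and> list_all2 (\<in>) ys Ls} \<union>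
                               {y * z | y z. y \<in> A \<and> z \<in> B})"
proof -
  have "{br xs | xs. list_all2 (\<in>) xs (A # Ls)} =
        {br (y # ys) | y ys. y \<in> A \<and> list_all2 (\<in>) ys Ls}"
    by (auto simp: list_all2_Cons2)
  moreover have "vs.span (vs.span X \<union> vs.span Y) = vs.span (X \<union> Y)" for X Y
    by (simp add: vs.span_Un vs.span_span)
  ultimately show ?thesis by (simp add: ssum_def sbr_eq_span sprod_def)
qed

lemma subspace_pow_step: "vs.subspace (pow_step A Ls B)"
  by (simp add: ssum_def)

lemma bracket_mem_pow_step:
  "y \<in> A \<Longrightarrow> list_all2 (\<in>) ys Ls \<Longrightarrow> br (y # ys) \<in> pow_step A Ls B"
  unfolding pow_step_eq_span by (rule vs.span_base) blast

lemma mult_mem_pow_step: "y \<in> A \<Longrightarrow> z \<in> B \<Longrightarrow> y * z \<in> pow_step A Ls B"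
  unfolding pow_step_eq_span by (rule vs.span_base) blast

lemma pow_step_subset:
  assumes "vs.subspace T"
    and "\<And>y ys. y \<in> A \<Longrightarrow> list_all2 (\<in>) ys Ls \<Longrightarrow> br (y # ys) \<in> T"
    and "\<And>y z. y \<in> A \<Longrightarrow> z \<in> B \<Longrightarrow> y * z \<in> T"
  shows "pow_step A Ls B \<subseteq> T"
  unfolding pow_step_eq_span using assms by (intro vs.span_minimal) auto

lemma pow_step_mono:
  assumes "A \<subseteq> A'" "list_all2 (\<subseteq>) Ls Ls'" "B \<subseteq> B'"
  shows "pow_step A Ls B \<subseteq> pow_step A' Ls' B'"
proof (rule pow_step_subset[OF subspace_pow_step])
  fix y ys assume "y \<in> A" "list_all2 (\<in>) ys Ls"
  moreover have "list_all2 (\<in>) ys Ls'"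
    using list_all2_trans[OF _ \<open>list_all2 (\<in>) ys Ls\<close> assms(2), of "(\<in>)"] by blast
  ultimately show "br (y # ys) \<in> pow_step A' Ls' B'"
    using assms(1) by (blast intro: bracket_mem_pow_step)
qed (use assms in \<open>blast intro: mult_mem_pow_step\<close>)

lemma pow_step_zero:
  assumes "length Ls = n - 1"
  shows "pow_step {0} Ls B = {0}"
proof -
  have "br (0 # ys) = 0" if "length ys = n - 1" for ys
    using bracket_zero[of "0 # ys" 0] that arity by simp
  then have "pow_step {0} Ls B \<subseteq> {0}"
    using assms by (intro pow_step_subset) (auto dest: list_all2_lengthD)
  then show ?thesis using vs.subspace_0[OF subspace_pow_step] by blast
qed

context
  fixes X I :: "'a set" and Ls :: "'a set list"
  assumes X: "pideal scale br n X" and I: "pideal scale br n I"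
    and Ls: "length Ls = n - 1" "\<forall>L\<in>set Ls. pideal scale br n L" "Ls ! 0 \<subseteq> I"
begin

private definition gens :: "'a set" where
  "gens = {br (y # ys) | y ys. y \<in> X \<and> list_all2 (\<in>) ys Ls} \<union>
          {y * z | y z. y \<in> X \<and> z \<in> I}"

private lemma pow_step_eq_span_gens: "pow_step X Ls I = vs.span gens"
  unfolding gens_def by (rule pow_step_eq_span)

private lemma gens_cases:
  assumes "g \<in> gens"
  obtains (bracket) y ys
      where "g = br (y # ys)" "y \<in> X" "list_all2 (\<in>) ys Ls" "length ys = n - 1"
    | (product) y z where "g = y * z" "y \<in> X" "z \<in> I"
  using assms Ls(1) list_all2_lengthD unfolding gens_def by fastforce

lemma pow_step_mult_closed:
  assumes x: "x \<in> pow_step X Ls I"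
  shows "p * x \<in> pow_step X Ls I"
proof (rule mult_mem_span[OF subspace_pow_step, of UNIV gens])
  fix p g assume "g \<in> gens"
  then show "p * g \<in> pow_step X Ls I"
  proof (cases rule: gens_cases)
    case (bracket y ys)
    have "br (p # ys) \<in> I"
      by (rule pideal_bracket[OF I, of _ 1])
         (use bracket Ls arity in \<open>auto simp: list_all2_conv_all_nth\<close>)
    moreover have "p * g = br ((p * y) # ys) - y * br (p # ys)"
      using bracket_leibniz[OF bracket(4), of p y] bracket(1) by simp
    ultimately show ?thesis
      using bracket pideal_mult[OF X]
      by (simp add: vs.subspace_diff subspace_pow_step bracket_mem_pow_step mult_mem_pow_step)
  next
    case (product y z)
    then show ?thesis
      using pideal_mult[OF X] by (simp add: mult.assoc[symmetric] mult_mem_pow_step)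
  qed
qed (use x in \<open>simp_all add: pow_step_eq_span_gens\<close>)

private lemma bracket_gen_mem:
  assumes g: "g \<in> gens" and zs: "length zs = n - 1"
  shows "br (g # zs) \<in> pow_step X Ls I"
  using g
proof (cases rule: gens_cases)
  case (product y z)
  have "br (g # zs) = y * br (z # zs) + br (y # zs) * z"
    using bracket_leibniz[OF zs] product(1) by (simp add: mult.commute)
  moreover have "br (z # zs) \<in> I" "br (y # zs) \<in> X"
    using product zs pideal_bracket_Cons I X by blast+
  ultimately show ?thesis
    using product by (simp add: vs.subspace_add subspace_pow_step mult_mem_pow_step)
next
  case (bracket y ls)
  show ?thesis
    unfolding bracket(1)
  proof (rule bracket_of_bracket_mem[OF subspace_pow_step zs])
    fix ws :: "'a list" and i assume ws: "length ws = n - 1" and i: "i < n"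
    show "br ((y # ls)[i := br (ws @ [(y # ls) ! i])]) \<in> pow_step X Ls I"
    proof (cases i)
      case 0
      have "br (ws @ [y]) \<in> X"
        by (rule pideal_bracket[OF X, of _ "n - 1"])
           (use ws arity bracket in \<open>auto simp: nth_append\<close>)
      then show ?thesis using 0 bracket by (simp add: bracket_mem_pow_step)
    next
      case (Suc j)
      have j: "j < n - 1" using i Suc by simp
      have "Ls ! j \<in> set Ls" "ls ! j \<in> Ls ! j"
        using j bracket Ls(1) by (auto simp: list_all2_conv_all_nth)
      then have "br (ws @ [ls ! j]) \<in> Ls ! j"
        using Ls(2) ws arity by (intro pideal_bracket[of _ _ "n - 1"]) (auto simp: nth_append)
      then have "list_all2 (\<in>) (ls[j := br (ws @ [ls ! j])]) Ls"
        using bracket(3) j Ls(1) by (auto simp: list_all2_conv_all_nth nth_list_update)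
      then show ?thesis using Suc bracket(2) by (simp add: bracket_mem_pow_step)
    qed
  qed (use bracket arity in simp)
qed

lemma pow_step_bracket_closed:
  assumes x: "x \<in> pow_step X Ls I" and ys: "length ys = n - 1"
  shows "br (x # ys) \<in> pow_step X Ls I"
proof (rule bracket_mem_span_args[OF subspace_pow_step, of "gens # replicate (n - 1) UNIV"])
  fix zs assume "list_all2 (\<in>) zs (gens # replicate (n - 1) UNIV)"
  then obtain g zs' where "zs = g # zs'" "g \<in> gens" "length zs' = n - 1"
    by (auto simp: list_all2_Cons2 list_all2_replicate_right)
  then show "br zs \<in> pow_step X Ls I" using bracket_gen_mem by simp
qed (use x ys arity in
      \<open>simp_all add: list_all2_replicate_right pow_step_eq_span_gens[symmetric]\<close>)

lemma pideal_pow_step: "pideal scale br n (pow_step X Ls I)"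
  unfolding pideal_iff
  using subspace_pow_step pow_step_mult_closed pow_step_bracket_closed by blast

end

lemma pideal_derived_pow:
  assumes "pideal scale br n J"
  shows "pideal scale br n (derived_pow scale br n J k)"
  by (induction k) (use assms arity in \<open>auto intro: pideal_pow_step\<close>)

lemma pideal_ideal_pow:
  assumes "pideal scale br n N"
  shows "pideal scale br n (ideal_pow scale br n N k)"
  by (induction k) (use assms arity pideal_UNIV in \<open>auto intro: pideal_pow_step\<close>)

lemma derived_pow_eq_zero_mono:
  assumes "derived_pow scale br n J s = {0}" "s \<le> t"
  shows "derived_pow scale br n J t = {0}"
  using assms(2,1) by (induction t rule: dec_induct) (simp_all add: pow_step_zero)

lemma ideal_pow_eq_zero_mono:
  assumes "ideal_pow scale br n N s = {0}" "s \<le> t"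
  shows "ideal_pow scale br n N t = {0}"
  using assms(2,1) arity by (induction t rule: dec_induct) (simp_all add: pow_step_zero)

lemma ideal_pow_mono:
  assumes "I \<subseteq> I'"
  shows "ideal_pow scale br n I k \<subseteq> ideal_pow scale br n I' k"
proof (induction k)
  case 0
  then show ?case using assms by simp
next
  case (Suc k)
  have "list_all2 (\<subseteq>) (I # replicate (n - 2) UNIV) (I' # replicate (n - 2) UNIV)"
    using assms by (simp add: list_all2_replicate_right)
  then show ?case
    unfolding ideal_pow.simps by (rule pow_step_mono[OF Suc.IH _ assms])
qed

lemma nilpotent_ideal_subset:
  assumes "nilpotent_ideal scale br n K" "pideal scale br n I" "I \<subseteq> K"
  shows "nilpotent_ideal scale br n I"
proof -
  obtain s where "ideal_pow scale br n K s = {0}"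
    using assms(1) unfolding nilpotent_ideal_def by blast
  then have "ideal_pow scale br n I s \<subseteq> {0}" using ideal_pow_mono[OF assms(3)] by blast
  moreover have "0 \<in> ideal_pow scale br n I s"
    using pideal_ideal_pow[OF assms(2)] pideal_subspace vs.subspace_0 by blast
  ultimately show ?thesis using assms(2) unfolding nilpotent_ideal_def by blast
qed

lemma pideal_ssum:
  assumes I: "pideal scale br n I" and I': "pideal scale br n I'"
  shows "pideal scale br n (ssum scale I I')"
proof -
  have K: "ssum scale I I' = vs.span (I \<union> I')" by (simp add: ssum_def)
  have "p * x \<in> ssum scale I I'" if "x \<in> ssum scale I I'" for p x
  proof (rule mult_mem_span[of _ UNIV "I \<union> I'"])
    fix a b assume "b \<in> I \<union> I'"
    then have "a * b \<in> I \<union> I'" using pideal_mult I I' by blast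
    then show "a * b \<in> ssum scale I I'" unfolding K by (rule vs.span_base)
  qed (use that K in simp_all)
  moreover have "br (x # ys) \<in> ssum scale I I'"
    if "x \<in> ssum scale I I'" "length ys = n - 1" for x ys
  proof (rule bracket_mem_span_args[of _ "(I \<union> I') # replicate (n - 1) UNIV"])
    fix zs assume "list_all2 (\<in>) zs ((I \<union> I') # replicate (n - 1) UNIV)"
    then obtain z zs' where "zs = z # zs'" "z \<in> I \<union> I'" "length zs' = n - 1"
      by (auto simp: list_all2_Cons2 list_all2_replicate_right)
    then have "br zs \<in> I \<union> I'" using I I' by (auto simp: pideal_iff)
    then show "br zs \<in> ssum scale I I'" unfolding K by (rule vs.span_base)
  qed (use that K arity in \<open>simp_all add: list_all2_replicate_right\<close>)
  ultimately show ?thesis unfolding pideal_iff K by simp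
qed

text \<open>Index 0 is the whole algebra, so that derived_series J a is J^[a] and
  lower_central_series N t is N^t in the paper's notation.\<close>

definition derived_series :: "'a set \<Rightarrow> nat \<Rightarrow> 'a set" where
  "derived_series J a = (case a of 0 \<Rightarrow> UNIV | Suc k \<Rightarrow> derived_pow scale br n J k)"

definition lower_central_series :: "'a set \<Rightarrow> nat \<Rightarrow> 'a set" where
  "lower_central_series N t = (case t of 0 \<Rightarrow> UNIV | Suc k \<Rightarrow> ideal_pow scale br n N k)"

lemma pideal_derived_series:
  "pideal scale br n J \<Longrightarrow> pideal scale br n (derived_series J a)"
  by (cases a) (simp_all add: derived_series_def pideal_UNIV pideal_derived_pow)

lemma pideal_lower_central_series:
  "pideal scale br n N \<Longrightarrow> pideal scale br n (lower_central_series N t)"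
  by (cases t) (simp_all add: lower_central_series_def pideal_UNIV pideal_ideal_pow)

lemma bracket_mem_derived_series_Suc:
  assumes J: "pideal scale br n J" and x: "x \<in> derived_series J a"
    and zs: "length zs = n - 1" "set zs \<subseteq> J"
  shows "br (x # zs) \<in> derived_series J (Suc a)"
proof (cases a)
  case 0
  have "zs ! 0 \<in> J" using zs arity nth_mem[of 0 zs] by auto
  then have "br (x # zs) \<in> J" by (intro pideal_bracket[OF J, of _ 1]) (use zs arity in auto)
  then show ?thesis using 0 by (simp add: derived_series_def)
next
  case (Suc k)
  then show ?thesis
    using x zs
    by (simp add: derived_series_def bracket_mem_pow_step list_all2_replicate_right subsetD)
qed

lemma mult_mem_derived_series_Suc:
  assumes J: "pideal scale br n J" and x: "x \<in> derived_series J a" and z: "z \<in> J"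
  shows "x * z \<in> derived_series J (Suc a)"
proof (cases a)
  case 0
  then show ?thesis
    using pideal_mult[OF J z, of x] by (simp add: derived_series_def mult.commute)
next
  case (Suc k)
  then show ?thesis using x z by (simp add: derived_series_def mult_mem_pow_step)
qed

lemma bracket_mem_lower_central_series_Suc:
  assumes N: "pideal scale br n N" and x: "x \<in> lower_central_series N t"
    and zs: "length zs = n - 1" "z \<in> set zs" "z \<in> N"
  shows "br (x # zs) \<in> lower_central_series N (Suc t)"
proof -
  obtain i where i: "i < n - 1" "zs ! i \<in> N" using zs by (auto simp: in_set_conv_nth)
  show ?thesis
  proof (cases t)
    case 0
    have "br (x # zs) \<in> N" by (rule pideal_bracket[OF N, of _ "Suc i"]) (use i zs in auto)
    then show ?thesis using 0 by (simp add: lower_central_series_def)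
  next
    case (Suc k)
    \<comment> \<open>N^(t+1) = [N^t, N, P, ..., P] + N^t N: the argument from N must sit in slot 1.\<close>
    define ws where "ws = zs[0 := zs ! i, i := zs ! 0]"
    have "length ws = n - 1" "ws ! 0 \<in> N" using i zs by (auto simp: ws_def nth_list_update)
    then have "list_all2 (\<in>) ws (N # replicate (n - 2) UNIV)"
      using arity by (cases ws) (auto simp: list_all2_replicate_right)
    then have "br (x # ws) \<in> lower_central_series N (Suc t)"
      using x Suc by (simp add: lower_central_series_def bracket_mem_pow_step)
    moreover have "(x # zs)[1 := (x # zs) ! Suc i, Suc i := (x # zs) ! 1] = x # ws"
      by (simp add: ws_def)
    ultimately show ?thesis
      using bracket_mem_swap[of _ "x # zs" 1 "Suc i"] pideal_lower_central_series[OF N]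
        pideal_subspace zs i arity
      by simp
  qed
qed

lemma mult_mem_lower_central_series_Suc:
  assumes N: "pideal scale br n N" and x: "x \<in> lower_central_series N t" and z: "z \<in> N"
  shows "x * z \<in> lower_central_series N (Suc t)"
proof (cases t)
  case 0
  then show ?thesis
    using pideal_mult[OF N z, of x] by (simp add: lower_central_series_def mult.commute)
next
  case (Suc k)
  then show ?thesis using x z by (simp add: lower_central_series_def mult_mem_pow_step)
qed

lemma derived_series_eq_zero:
  assumes "derived_pow scale br n J s = {0}" "s < a"
  shows "derived_series J a = {0}"
proof -
  obtain k where "a = Suc k" "s \<le> k" using assms(2) by (cases a) auto
  then show ?thesis
    using derived_pow_eq_zero_mono[OF assms(1)] by (simp add: derived_series_def)
qed

lemma lower_central_series_eq_zero:
  assumes "ideal_pow scale br n N r = {0}" "r < t"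
  shows "lower_central_series N t = {0}"
proof -
  obtain k where "t = Suc k" "r \<le> k" using assms(2) by (cases t) auto
  then show ?thesis
    using ideal_pow_eq_zero_mono[OF assms(1)] by (simp add: lower_central_series_def)
qed

definition mixed_filtration_gens :: "'a set \<Rightarrow> 'a set \<Rightarrow> nat \<Rightarrow> 'a set" where
  "mixed_filtration_gens J N c = (\<Union>a\<le>c. derived_series J a \<inter> lower_central_series N (c - a))"

definition mixed_filtration :: "'a set \<Rightarrow> 'a set \<Rightarrow> nat \<Rightarrow> 'a set" where
  "mixed_filtration J N c = vs.span (mixed_filtration_gens J N c)"

lemma subspace_mixed_filtration: "vs.subspace (mixed_filtration J N c)"
  by (simp add: mixed_filtration_def)

lemma mem_mixed_filtration:
  "x \<in> derived_series J a \<Longrightarrow> x \<in> lower_central_series N t \<Longrightarrow>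
   x \<in> mixed_filtration J N (a + t)"
  unfolding mixed_filtration_def mixed_filtration_gens_def by (rule vs.span_base) force

lemma mixed_filtration_eq_zero:
  assumes J: "derived_pow scale br n J s = {0}" and N: "ideal_pow scale br n N r = {0}"
  shows "mixed_filtration J N (s + r + 2) = {0}"
proof -
  have "derived_series J a \<inter> lower_central_series N (s + r + 2 - a) \<subseteq> {0}" for a
  proof (cases "s < a")
    case True
    then show ?thesis using derived_series_eq_zero[OF J] by blast
  next
    case False
    then have "r < s + r + 2 - a" by linarith
    then show ?thesis using lower_central_series_eq_zero[OF N] by blast
  qed
  then have "mixed_filtration J N (s + r + 2) \<subseteq> {0}"
    unfolding mixed_filtration_def mixed_filtration_gens_def by (intro vs.span_minimal) auto
  then show ?thesis using vs.subspace_0[OF subspace_mixed_filtration] by blast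
qed

context
  fixes J N :: "'a set"
  assumes J: "pideal scale br n J" and N: "pideal scale br n N"
begin

lemma bracket_mem_mixed_filtration:
  assumes x: "x \<in> mixed_filtration J N c"
    and ys: "length ys = n - 1" "set ys \<subseteq> ssum scale J N"
  shows "br (x # ys) \<in> mixed_filtration J N (Suc c)"
proof (rule bracket_mem_span_args[OF subspace_mixed_filtration,
      of "mixed_filtration_gens J N c # replicate (n - 1) (J \<union> N)"])
  fix zs assume "list_all2 (\<in>) zs (mixed_filtration_gens J N c # replicate (n - 1) (J \<union> N))"
  then obtain g zs' a where zs: "zs = g # zs'" "length zs' = n - 1" "set zs' \<subseteq> J \<union> N"
    and a: "a \<le> c" "g \<in> derived_series J a" "g \<in> lower_central_series N (c - a)"
    by (auto simp: list_all2_Cons2 list_all2_replicate_right mixed_filtration_gens_def)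
  have "br (g # zs') \<in> mixed_filtration J N (Suc c)"
  proof (cases "set zs' \<subseteq> J")
    case True
    have "br (g # zs') \<in> derived_series J (Suc a)"
      by (rule bracket_mem_derived_series_Suc[OF J a(2) zs(2) True])
    moreover have "br (g # zs') \<in> lower_central_series N (c - a)"
      by (rule pideal_bracket_Cons[OF pideal_lower_central_series[OF N] a(3) zs(2)])
    ultimately show ?thesis using mem_mixed_filtration[of _ J "Suc a" N "c - a"] a(1) by simp
  next
    case False
    then obtain z where "z \<in> set zs'" "z \<in> N" using zs(3) by auto
    then have "br (g # zs') \<in> lower_central_series N (Suc (c - a))"
      by (rule bracket_mem_lower_central_series_Suc[OF N a(3) zs(2)])
    moreover have "br (g # zs') \<in> derived_series J a"
      by (rule pideal_bracket_Cons[OF pideal_derived_series[OF J] a(2) zs(2)])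
    ultimately show ?thesis using mem_mixed_filtration[of _ J a N "Suc (c - a)"] a(1) by simp
  qed
  then show "br zs \<in> mixed_filtration J N (Suc c)" using zs(1) by simp
next
  show "list_all2 (\<lambda>x G. x \<in> vs.span G) (x # ys)
          (mixed_filtration_gens J N c # replicate (n - 1) (J \<union> N))"
    using x ys by (auto simp: list_all2_replicate_right mixed_filtration_def ssum_def)
qed (use arity in simp)

lemma mult_mem_mixed_filtration:
  assumes x: "x \<in> mixed_filtration J N c" and z: "z \<in> ssum scale J N"
  shows "x * z \<in> mixed_filtration J N (Suc c)"
proof (rule mult_mem_span[OF subspace_mixed_filtration, of "mixed_filtration_gens J N c" "J \<union> N"])
  fix g z' assume g: "g \<in> mixed_filtration_gens J N c" and z': "z' \<in> J \<union> N"
  then obtain a where a: "a \<le> c" "g \<in> derived_series J a" "g \<in> lower_central_series N (c - a)"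
    unfolding mixed_filtration_gens_def by blast
  from z' show "g * z' \<in> mixed_filtration J N (Suc c)"
  proof
    assume "z' \<in> J"
    then have "g * z' \<in> derived_series J (Suc a)"
      by (rule mult_mem_derived_series_Suc[OF J a(2)])
    moreover have "g * z' \<in> lower_central_series N (c - a)"
      using pideal_mult[OF pideal_lower_central_series[OF N] a(3), of z']
      by (simp add: mult.commute)
    ultimately show ?thesis using mem_mixed_filtration[of _ J "Suc a" N "c - a"] a(1) by simp
  next
    assume "z' \<in> N"
    then have "g * z' \<in> lower_central_series N (Suc (c - a))"
      by (rule mult_mem_lower_central_series_Suc[OF N a(3)])
    moreover have "g * z' \<in> derived_series J a"
      using pideal_mult[OF pideal_derived_series[OF J] a(2), of z']
      by (simp add: mult.commute)
    ultimately show ?thesis using mem_mixed_filtration[of _ J a N "Suc (c - a)"] a(1) by simp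
  qed
qed (use x z in \<open>simp_all add: mixed_filtration_def ssum_def\<close>)

lemma derived_pow_ssum_subset:
  "derived_pow scale br n (ssum scale J N) k \<subseteq> mixed_filtration J N (Suc k)"
proof (induction k)
  case 0
  have "J \<subseteq> mixed_filtration J N 1" "N \<subseteq> mixed_filtration J N 1"
    using mem_mixed_filtration[of _ J 1 N 0] mem_mixed_filtration[of _ J 0 N 1]
    by (auto simp: derived_series_def lower_central_series_def)
  then show ?case
    by (simp add: ssum_def vs.span_minimal subspace_mixed_filtration)
next
  case (Suc k)
  show ?case
    unfolding derived_pow.simps
  proof (rule pow_step_subset[OF subspace_mixed_filtration])
    fix y ys assume "y \<in> derived_pow scale br n (ssum scale J N) k"
      and "list_all2 (\<in>) ys (replicate (n - 1) (ssum scale J N))"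
    then show "br (y # ys) \<in> mixed_filtration J N (Suc (Suc k))"
      using Suc.IH by (intro bracket_mem_mixed_filtration) (auto simp: list_all2_replicate_right)
  next
    fix y z assume "y \<in> derived_pow scale br n (ssum scale J N) k" "z \<in> ssum scale J N"
    then show "y * z \<in> mixed_filtration J N (Suc (Suc k))"
      using Suc.IH by (intro mult_mem_mixed_filtration) auto
  qed
qed

end

lemma nilpotent_subalg_ssum:
  assumes J: "pideal scale br n J" "nilpotent_subalg scale br n J"
    and N: "nilpotent_ideal scale br n N"
  shows "nilpotent_subalg scale br n (ssum scale J N)"
proof -
  obtain s where s: "derived_pow scale br n J s = {0}"
    using J(2) unfolding nilpotent_subalg_def by blast
  obtain r where r: "ideal_pow scale br n N r = {0}" and N_ideal: "pideal scale br n N"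
    using N unfolding nilpotent_ideal_def by blast
  have "derived_pow scale br n (ssum scale J N) (s + r + 1) \<subseteq> {0}"
    using derived_pow_ssum_subset[OF J(1) N_ideal, of "s + r + 1"] mixed_filtration_eq_zero[OF s r]
    by simp
  moreover have "0 \<in> derived_pow scale br n (ssum scale J N) (s + r + 1)"
    using pideal_derived_pow[OF pideal_ssum[OF J(1) N_ideal]] pideal_subspace vs.subspace_0
    by blast
  ultimately show ?thesis unfolding nilpotent_subalg_def by blast
qed

end

theorem proposition5p15:
  fixes scale :: "'k::field \<Rightarrow> 'a::comm_ring \<Rightarrow> 'a"
    and br :: "'a list \<Rightarrow> 'a" and n :: nat and N J :: "'a set"
  assumes "n \<ge> 2"
    and "poisson_nlie scale br n"
    and "is_Nil scale br n N"
    and "max_hypo_nilpotent scale br n J"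
  shows "N \<subseteq> J"
proof -
  interpret poisson_nlie_algebra scale br n
    using assms(1,2) by unfold_locales
  from assms(4) have J: "pideal scale br n J" "nilpotent_subalg scale br n J"
      "\<not> nilpotent_ideal scale br n J"
    and J_maximal: "\<And>K. hypo_nilpotent scale br n K \<Longrightarrow> J \<subseteq> K \<Longrightarrow> K = J"
    unfolding max_hypo_nilpotent_def hypo_nilpotent_def by auto
  from assms(3) have N: "nilpotent_ideal scale br n N"
    unfolding is_Nil_def by blast
  then have N_ideal: "pideal scale br n N"
    unfolding nilpotent_ideal_def by blast
  let ?K = "ssum scale J N"
  have "J \<subseteq> ?K" "N \<subseteq> ?K"
    unfolding ssum_def using vs.span_superset by blast+
  moreover have "hypo_nilpotent scale br n ?K"
    unfolding hypo_nilpotent_def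
    using pideal_ssum[OF J(1) N_ideal] nilpotent_subalg_ssum[OF J(1,2) N]
      nilpotent_ideal_subset[OF _ J(1) \<open>J \<subseteq> ?K\<close>] J(3)
    by blast
  ultimately show ?thesis using J_maximal by blast
qed

end
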